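(* Let $\Gamma$ be a finite simplicial graph in which all equivalence classes are abelian. If $\Gamma$ has a SIL, then it has a special SIL.
   Context: $\mathrm{lk}(u)$ = neighbours of $u$, $\mathrm{st}(u)=\mathrm{lk}(u)\cup\{u\}$; $u\le v$ iff $\mathrm{lk}(u)\subseteq\mathrm{st}(v)$; $u\sim v$ iff $u\le v\le u$; class $[u]$; a class is abelian if its vertices are pairwise adjacent. A SIL is a triple $(x,y\mid z)$ of pairwise non-adjacent vertices such that the component of $\Gamma\setminus(\mathrm{lk}(x)\cap\mathrm{lk}(y))$ containing $z$ contains neither $x$ nor $y$. $\mathbb{A}_\Lambda$ is the right-angled Artin group of a graph $\Lambda$; for an induced subgraph it is identified with the subgroup generated by its vertices. $\mathrm{Out}^0(\mathbb{A}_\Lambda)$ is the subgroup of $\mathrm{Out}(\mathbb{A}_\Lambda)$ generated by transvections ($v\mapsto wv$ or $v\mapsto vw$ for $v\le w$, $v\neq w$) and partial conjugations ($z\mapsto vzv^{-1}$ for $z$ in a union of components of $\Lambda\setminus\mathrm{st}(v)$). For a SIL $S=(x_1,x_2\mid x_3)$, let $\Gamma_S$ be the subgraph induced on $[x_1]\cup[x_2]\cup[x_3]$ and $\Gamma_{\le S}$ the subgraph induced on $\{u: u\le x_i\text{ for some } i\}$. The epimorphism $\mathbb{A}_\Gamma\to\mathbb{A}_{\Gamma_{\le S}}$ killing all vertices outside $\Gamma_{\le S}$ induces a homomorphism $\mathrm{Fact}:\mathrm{Out}^0(\mathbb{A}_\Gamma)\to\mathrm{Out}^0(\mathbb{A}_{\Gamma_{\le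 S}})$. The SIL $S$ is special if each $[x_i]$ is abelian and every element of the image of $\mathrm{Fact}$ preserves the conjugacy class of the subgroup $\mathbb{A}_{\Gamma_S}$. *)

theory Defs
  imports "HOL-Algebra.Generated_Groups"
begin

definition simplicial_graph :: "'v set \<Rightarrow> ('v \<Rightarrow> 'v \<Rightarrow> bool) \<Rightarrow> bool" where
  "simplicial_graph V E \<longleftrightarrow>
     (\<forall>a b. E a b \<longrightarrow> a \<in> V \<and> b \<in> V) \<and>
     (\<forall>a b. E a b \<longrightarrow> E b a) \<and> (\<forall>a. \<not> E a a)"

definition lk :: "'v set \<Rightarrow> ('v \<Rightarrow> 'v \<Rightarrow> bool) \<Rightarrow> 'v \<Rightarrow> 'v set" where
  "lk V E u = {w \<in> V. E u w}"

definition st :: "'v set \<Rightarrow> ('v \<Rightarrow> 'v \<Rightarrow> bool) \<Rightarrow> 'v \<Rightarrow> 'v set" where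
  "st V E u = insert u (lk V E u)"

definition vle :: "'v set \<Rightarrow> ('v \<Rightarrow> 'v \<Rightarrow> bool) \<Rightarrow> 'v \<Rightarrow> 'v \<Rightarrow> bool" where
  "vle V E u v \<longleftrightarrow> u \<in> V \<and> v \<in> V \<and> lk V E u \<subseteq> st V E v"

definition vequiv :: "'v set \<Rightarrow> ('v \<Rightarrow> 'v \<Rightarrow> bool) \<Rightarrow> 'v \<Rightarrow> 'v \<Rightarrow> bool" where
  "vequiv V E u v \<longleftrightarrow> vle V E u v \<and> vle V E v u"

definition vclass :: "'v set \<Rightarrow> ('v \<Rightarrow> 'v \<Rightarrow> bool) \<Rightarrow> 'v \<Rightarrow> 'v set" where
  "vclass V E u = {v \<in> V. vequiv V E u v}"

definition abelian_set :: "('v \<Rightarrow> 'v \<Rightarrow> bool) \<Rightarrow> 'v set \<Rightarrow> bool" where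
  "abelian_set E C \<longleftrightarrow> (\<forall>a\<in>C. \<forall>b\<in>C. a \<noteq> b \<longrightarrow> E a b)"

definition conn_in :: "('v \<Rightarrow> 'v \<Rightarrow> bool) \<Rightarrow> 'v set \<Rightarrow> 'v \<Rightarrow> 'v \<Rightarrow> bool" where
  "conn_in E W a b \<longleftrightarrow> a \<in> W \<and> b \<in> W \<and>
     (a, b) \<in> {(p, q). p \<in> W \<and> q \<in> W \<and> E p q}\<^sup>*"

definition SIL :: "'v set \<Rightarrow> ('v \<Rightarrow> 'v \<Rightarrow> bool) \<Rightarrow> 'v \<Rightarrow> 'v \<Rightarrow> 'v \<Rightarrow> bool" where
  "SIL V E x y z \<longleftrightarrow>
     x \<in> V \<and> y \<in> V \<and> z \<in> V \<and> x \<noteq> y \<and> x \<noteq> z \<and> y \<noteq> z \<and>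
     \<not> E x y \<and> \<not> E x z \<and> \<not> E y z \<and>
     (let W = V - (lk V E x \<inter> lk V E y) in
        \<not> conn_in E W z x \<and> \<not> conn_in E W z y)"

text \<open>Words are lists of letters (vertex, sign); sign True = generator, False = inverse.\<close>

type_synonym 'v word = "('v \<times> bool) list"

definition inv_word :: "'v word \<Rightarrow> 'v word" where
  "inv_word w = rev (map (\<lambda>(a, b). (a, \<not> b)) w)"

definition raag_step :: "'v set \<Rightarrow> ('v \<Rightarrow> 'v \<Rightarrow> bool) \<Rightarrow> ('v word \<times> 'v word) set" where
  "raag_step V E =
     {(xs @ [(a, b), (a, \<not> b)] @ ys, xs @ ys) | xs ys a b. a \<in> V} \<union>
     {(xs @ [(a, b), (c, d)] @ ys, xs @ [(c, d), (a, b)] @ ys) | xs ys a b c d. E a c}"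

definition raag_eq :: "'v set \<Rightarrow> ('v \<Rightarrow> 'v \<Rightarrow> bool) \<Rightarrow> ('v word \<times> 'v word) set" where
  "raag_eq V E = (raag_step V E \<union> (raag_step V E)\<inverse>)\<^sup>*"

definition raag_cls :: "'v set \<Rightarrow> ('v \<Rightarrow> 'v \<Rightarrow> bool) \<Rightarrow> 'v word \<Rightarrow> 'v word set" where
  "raag_cls V E w = raag_eq V E `` {w}"

definition RAAG :: "'v set \<Rightarrow> ('v \<Rightarrow> 'v \<Rightarrow> bool) \<Rightarrow> 'v word set monoid" where
  "RAAG V E =
     \<lparr>carrier = {raag_cls V E w | w. set w \<subseteq> V \<times> UNIV},
      mult = (\<lambda>A B. {w. \<exists>a\<in>A. \<exists>b\<in>B. (a @ b, w) \<in> raag_eq V E}),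
      one = raag_cls V E []\<rparr>"

definition vgen :: "'v set \<Rightarrow> ('v \<Rightarrow> 'v \<Rightarrow> bool) \<Rightarrow> 'v \<Rightarrow> 'v word set" where
  "vgen V E u = raag_cls V E [(u, True)]"

definition special_subgroup :: "'v set \<Rightarrow> ('v \<Rightarrow> 'v \<Rightarrow> bool) \<Rightarrow> 'v set \<Rightarrow> 'v word set set" where
  "special_subgroup V E U = generate (RAAG V E) (vgen V E ` U)"

definition word_hom :: "('v \<Rightarrow> 'v word) \<Rightarrow> 'v word \<Rightarrow> 'v word" where
  "word_hom \<sigma> w = concat (map (\<lambda>(a, b). if b then \<sigma> a else inv_word (\<sigma> a)) w)"

definition hom_of :: "'v set \<Rightarrow> ('v \<Rightarrow> 'v \<Rightarrow> bool) \<Rightarrow> ('v \<Rightarrow> 'v word) \<Rightarrow> 'v word set \<Rightarrow> 'v word set" where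
  "hom_of V E \<sigma> A = {w'. \<exists>w\<in>A. (word_hom \<sigma> w, w') \<in> raag_eq V E}"

definition id_subst :: "'v \<Rightarrow> 'v word" where
  "id_subst u = [(u, True)]"

text \<open>Transvections v \<mapsto> w^e v and v \<mapsto> v w^e (v \<le> w, v \<noteq> w); the sign e allows the
  inverse transvections, so the monoid generated below is the group generated.\<close>
definition transvection :: "'v set \<Rightarrow> ('v \<Rightarrow> 'v \<Rightarrow> bool) \<Rightarrow> ('v \<Rightarrow> 'v word) \<Rightarrow> bool" where
  "transvection V E \<sigma> \<longleftrightarrow> (\<exists>v w e. vle V E v w \<and> v \<noteq> w \<and>
     (\<sigma> = id_subst(v := [(w, e), (v, True)]) \<or> \<sigma> = id_subst(v := [(v, True), (w, e)])))"

text \<open>Partial conjugations z \<mapsto> v^e z v^-e for z in a union C of components of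
  the graph minus st(v) (again e allows the inverses).\<close>
definition partial_conjugation :: "'v set \<Rightarrow> ('v \<Rightarrow> 'v \<Rightarrow> bool) \<Rightarrow> ('v \<Rightarrow> 'v word) \<Rightarrow> bool" where
  "partial_conjugation V E \<sigma> \<longleftrightarrow> (\<exists>v C e. v \<in> V \<and> C \<subseteq> V - st V E v \<and>
     (\<forall>p\<in>C. \<forall>q\<in>V - st V E v. E p q \<longrightarrow> q \<in> C) \<and>
     \<sigma> = (\<lambda>u. if u \<in> C then [(v, e), (u, True), (v, \<not> e)] else [(u, True)]))"

text \<open>Automorphisms (given by the images of the generators) in the subgroup of Aut
  generated by transvections and partial conjugations; its image in Out is Out^0.\<close>
inductive_set out0_subst :: "'v set \<Rightarrow> ('v \<Rightarrow> 'v \<Rightarrow> bool) \<Rightarrow> ('v \<Rightarrow> 'v word) set"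
  for V E where
    idI: "id_subst \<in> out0_subst V E"
  | genI: "\<tau> \<in> out0_subst V E \<Longrightarrow> transvection V E \<sigma> \<or> partial_conjugation V E \<sigma> \<Longrightarrow>
           (\<lambda>u. word_hom \<sigma> (\<tau> u)) \<in> out0_subst V E"

definition kill_outside :: "'v set \<Rightarrow> 'v \<Rightarrow> 'v word" where
  "kill_outside U u = (if u \<in> U then [(u, True)] else [])"

definition Gamma_S :: "'v set \<Rightarrow> ('v \<Rightarrow> 'v \<Rightarrow> bool) \<Rightarrow> 'v \<Rightarrow> 'v \<Rightarrow> 'v \<Rightarrow> 'v set" where
  "Gamma_S V E x1 x2 x3 = vclass V E x1 \<union> vclass V E x2 \<union> vclass V E x3"

definition Gamma_le_S :: "'v set \<Rightarrow> ('v \<Rightarrow> 'v \<Rightarrow> bool) \<Rightarrow> 'v \<Rightarrow> 'v \<Rightarrow> 'v \<Rightarrow> 'v set" where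
  "Gamma_le_S V E x1 x2 x3 = {u \<in> V. vle V E u x1 \<or> vle V E u x2 \<or> vle V E u x3}"

text \<open>Fact(f), for f represented by the automorphism \<tau>, is represented by the map
  \<pi> \<circ> f restricted to A_{\<Gamma>_{\<le>S}} (\<pi> the retraction killing vertices outside \<Gamma>_{\<le>S}).
  It preserves the conjugacy class of A_{\<Gamma>_S} iff it maps A_{\<Gamma>_S} onto a conjugate
  g A_{\<Gamma>_S} g^-1 with g in A_{\<Gamma>_{\<le>S}}. This is independent of the representative.\<close>
definition special_SIL :: "'v set \<Rightarrow> ('v \<Rightarrow> 'v \<Rightarrow> bool) \<Rightarrow> 'v \<Rightarrow> 'v \<Rightarrow> 'v \<Rightarrow> bool" where
  "special_SIL V E x1 x2 x3 \<longleftrightarrow>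
     SIL V E x1 x2 x3 \<and>
     abelian_set E (vclass V E x1) \<and> abelian_set E (vclass V E x2) \<and>
     abelian_set E (vclass V E x3) \<and>
     (let G = RAAG V E;
          H = special_subgroup V E (Gamma_S V E x1 x2 x3);
          L = special_subgroup V E (Gamma_le_S V E x1 x2 x3);
          \<pi> = hom_of V E (kill_outside (Gamma_le_S V E x1 x2 x3))
      in \<forall>\<tau> \<in> out0_subst V E. \<exists>g \<in> L.
           (\<lambda>h. \<pi> (hom_of V E \<tau> h)) ` H = {g \<otimes>\<^bsub>G\<^esub> h \<otimes>\<^bsub>G\<^esub> inv\<^bsub>G\<^esub> g | h. h \<in> H})"

end

theory Submission
  imports Defs
begin

text \<open>Choose a SIL (x1, x2 | x3) for which the total size of the down-sets of x1, x2, x3 is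
  minimal. Then no vertex v outside Gamma_S can take the place of one of the x_i: v \<le> x3 is
  impossible, and for v \<le> x1 the vertices x2 and x3 stay connected in the graph minus st(v),
  which forces all of Gamma_S - st(v) into the component of x3; moreover Gamma_S is upward closed
  in Gamma_{\<le>S}. For such a SIL each generator of Out^0, followed by killing the vertices
  outside Gamma_{\<le>S}, maps A_{Gamma_S} onto a conjugate of itself: a transvection becomes
  trivial on Gamma_S or an automorphism of A_{Gamma_S}, and a partial conjugation by v acts on
  Gamma_S trivially, as an automorphism, or as conjugation by v. Killing commutes with the
  generators, so induction over words in the generators covers all of Out^0.\<close>

definition word_over :: "'v set \<Rightarrow> 'v word \<Rightarrow> bool" where
  "word_over U w \<longleftrightarrow> set w \<subseteq> U \<times> UNIV"

lemma word_over_simps [simp]: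
  "word_over U []"
  "word_over U ((a, b) # w) \<longleftrightarrow> a \<in> U \<and> word_over U w"
  "word_over U (x @ y) \<longleftrightarrow> word_over U x \<and> word_over U y"
  unfolding word_over_def by auto

lemma word_over_mono: "word_over U w \<Longrightarrow> U \<subseteq> U' \<Longrightarrow> word_over U' w"
  unfolding word_over_def by auto

lemma inv_word_simps [simp]:
  "inv_word [] = []"
  "inv_word ((a, b) # w) = inv_word w @ [(a, \<not> b)]"
  "inv_word (x @ y) = inv_word y @ inv_word x"
  "inv_word (inv_word x) = x"
  unfolding inv_word_def by (auto simp: rev_map comp_def case_prod_unfold)

lemma word_over_inv_word [simp]: "word_over U (inv_word w) \<longleftrightarrow> word_over U w"
  unfolding word_over_def inv_word_def by auto

lemma word_hom_simps [simp]:
  "word_hom \<sigma> [] = []"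
  "word_hom \<sigma> ((a, b) # w) = (if b then \<sigma> a else inv_word (\<sigma> a)) @ word_hom \<sigma> w"
  "word_hom \<sigma> (x @ y) = word_hom \<sigma> x @ word_hom \<sigma> y"
  unfolding word_hom_def by auto

lemma word_hom_inv_word [simp]: "word_hom \<sigma> (inv_word x) = inv_word (word_hom \<sigma> x)"
  by (induction x) auto

lemma word_hom_comp: "word_hom (\<lambda>u. word_hom \<sigma> (\<tau> u)) w = word_hom \<sigma> (word_hom \<tau> w)"
  by (induction w) auto

lemma word_hom_id_subst [simp]: "word_hom id_subst w = w"
  by (induction w) (auto simp: id_subst_def)

lemma word_hom_cong:
  "(\<And>a. a \<in> U \<Longrightarrow> \<sigma> a = \<tau> a) \<Longrightarrow> word_over U w \<Longrightarrow> word_hom \<sigma> w = word_hom \<tau> w"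
  by (induction w) auto

lemma word_over_word_hom:
  "(\<And>a. a \<in> U \<Longrightarrow> word_over U' (\<sigma> a)) \<Longrightarrow> word_over U w \<Longrightarrow> word_over U' (word_hom \<sigma> w)"
  by (induction w) auto

lemma word_hom_kill_outside_id: "word_over U w \<Longrightarrow> word_hom (kill_outside U) w = w"
  by (induction w) (auto simp: kill_outside_def)

lemma word_over_word_hom_kill_outside: "word_over U (word_hom (kill_outside U) w)"
  by (rule word_over_word_hom[of UNIV]) (auto simp: kill_outside_def word_over_def)

definition left_transvection :: "'v \<Rightarrow> 'v \<Rightarrow> bool \<Rightarrow> 'v \<Rightarrow> 'v word" where
  "left_transvection v w e = id_subst(v := [(w, e), (v, True)])"

definition right_transvection :: "'v \<Rightarrow> 'v \<Rightarrow> bool \<Rightarrow> 'v \<Rightarrow> 'v word" where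
  "right_transvection v w e = id_subst(v := [(v, True), (w, e)])"

definition conj_subst :: "'v \<Rightarrow> 'v set \<Rightarrow> bool \<Rightarrow> 'v \<Rightarrow> 'v word" where
  "conj_subst v C e u = (if u \<in> C then [(v, e), (u, True), (v, \<not> e)] else [(u, True)])"

locale simplicial =
  fixes V :: "'v set" and E :: "'v \<Rightarrow> 'v \<Rightarrow> bool"
  assumes simplicial: "simplicial_graph V E"
begin

abbreviation raag_equiv :: "'v word \<Rightarrow> 'v word \<Rightarrow> bool" (infix "\<approx>" 50)
  where "x \<approx> y \<equiv> (x, y) \<in> raag_eq V E"

lemma adj_sym: "E a b \<Longrightarrow> E b a"
  using simplicial unfolding simplicial_graph_def by blast

lemma adj_commute: "E a b \<longleftrightarrow> E b a"
  using adj_sym by blast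

lemma adj_in_V: "E a b \<Longrightarrow> a \<in> V \<and> b \<in> V"
  using simplicial unfolding simplicial_graph_def by blast

lemma adj_irrefl: "\<not> E a a"
  using simplicial unfolding simplicial_graph_def by blast

section \<open>Equivalence of words\<close>

lemma raag_eq_refl [simp]: "x \<approx> x"
  unfolding raag_eq_def by simp

lemma raag_eq_sym: "x \<approx> y \<Longrightarrow> y \<approx> x"
proof -
  have "sym ((raag_step V E \<union> (raag_step V E)\<inverse>)\<^sup>*)"
    by (intro sym_rtrancl) (auto simp: sym_def)
  then show "x \<approx> y \<Longrightarrow> y \<approx> x" unfolding raag_eq_def sym_def by blast
qed

lemma raag_eq_trans [trans]: "x \<approx> y \<Longrightarrow> y \<approx> z \<Longrightarrow> x \<approx> z"
  unfolding raag_eq_def by (rule rtrancl_trans)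

lemma raag_eq_induct_step [consumes 1, case_names refl step]:
  assumes "x \<approx> y" and "P x"
    and "\<And>y z. x \<approx> y \<Longrightarrow> (y, z) \<in> raag_step V E \<or> (z, y) \<in> raag_step V E \<Longrightarrow> P y \<Longrightarrow> P z"
  shows "P y"
  using assms(1) unfolding raag_eq_def
proof (induction rule: rtrancl_induct)
  case base then show ?case using assms(2) by simp
next
  case (step y z) then show ?case using assms(3) unfolding raag_eq_def by blast
qed

lemma raag_eq_if_step: "(x, y) \<in> raag_step V E \<Longrightarrow> x \<approx> y"
  unfolding raag_eq_def by blast

lemma raag_step_context: "(x, y) \<in> raag_step V E \<Longrightarrow> (a @ x @ b, a @ y @ b) \<in> raag_step V E"
  unfolding raag_step_def
  by (elim UnE CollectE exE conjE; simp; metis append.assoc append_Cons)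

lemma raag_eq_context: "x \<approx> y \<Longrightarrow> a @ x @ b \<approx> a @ y @ b"
proof (induction rule: raag_eq_induct_step)
  case (step y z)
  then have "(a @ y @ b, a @ z @ b) \<in> raag_step V E \<union> (raag_step V E)\<inverse>"
    using raag_step_context by blast
  then show ?case using step.IH unfolding raag_eq_def by (meson rtrancl.rtrancl_into_rtrancl)
qed simp

lemma raag_eq_append: "x \<approx> x' \<Longrightarrow> y \<approx> y' \<Longrightarrow> x @ y \<approx> x' @ y'"
  using raag_eq_context[of x x' "[]" y] raag_eq_context[of y y' x' "[]"] raag_eq_trans by simp

lemma cancel_letters: "a \<in> V \<Longrightarrow> [(a, b), (a, \<not> b)] \<approx> []"
proof -
  assume "a \<in> V"
  then have "([] @ [(a, b), (a, \<not> b)] @ [], [] @ []) \<in> raag_step V E"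
    unfolding raag_step_def by blast
  then show ?thesis using raag_eq_if_step by simp
qed

lemma commute_letters: "E a c \<Longrightarrow> [(a, b), (c, d)] \<approx> [(c, d), (a, b)]"
proof -
  assume "E a c"
  then have "([] @ [(a, b), (c, d)] @ [], [] @ [(c, d), (a, b)] @ []) \<in> raag_step V E"
    unfolding raag_step_def by blast
  then show ?thesis using raag_eq_if_step by simp
qed

lemma append_inv_word: "word_over V w \<Longrightarrow> w @ inv_word w \<approx> []"
proof (induction w)
  case (Cons p w)
  obtain a b where p: "p = (a, b)" by force
  have "word_over V w" using Cons.prems by (simp add: p)
  then have "[(a, b)] @ (w @ inv_word w) @ [(a, \<not> b)] \<approx> [(a, b)] @ [] @ [(a, \<not> b)]"
    by (rule raag_eq_context[OF Cons.IH])
  moreover have "[(a, b)] @ [] @ [(a, \<not> b)] \<approx> []" using cancel_letters Cons by (simp add: p)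
  ultimately show ?case using raag_eq_trans by (simp add: p)
qed simp

lemma inv_word_append: "word_over V w \<Longrightarrow> inv_word w @ w \<approx> []"
  using append_inv_word[of "inv_word w"] by simp

lemma raag_eq_inv_word: "x \<approx> y \<Longrightarrow> inv_word x \<approx> inv_word y"
proof (induction rule: raag_eq_induct_step)
  case (step y z)
  have inv_step: "(inv_word y, inv_word z) \<in> raag_step V E" if "(y, z) \<in> raag_step V E" for y z
    using that[unfolded raag_step_def]
  proof (elim UnE CollectE exE conjE)
    fix xs ys a b assume yz: "(y, z) = (xs @ [(a, b), (a, \<not> b)] @ ys, xs @ ys)" and "a \<in> V"
    then have "(inv_word ys @ [(a, b), (a, \<not> b)] @ inv_word xs, inv_word ys @ inv_word xs)
                 \<in> raag_step V E"
      unfolding raag_step_def by blast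
    then show ?thesis using yz by simp
  next
    fix xs ys a b c d assume yz: "(y, z) = (xs @ [(a, b), (c, d)] @ ys, xs @ [(c, d), (a, b)] @ ys)" and "E a c"
    then have "(inv_word ys @ [(c, \<not> d), (a, \<not> b)] @ inv_word xs,
                inv_word ys @ [(a, \<not> b), (c, \<not> d)] @ inv_word xs) \<in> raag_step V E"
      using adj_sym unfolding raag_step_def by blast
    then show ?thesis using yz by simp
  qed
  from step.hyps(2) have "(inv_word y, inv_word z) \<in> raag_step V E \<union> (raag_step V E)\<inverse>"
    using inv_step by blast
  with step.IH show ?case unfolding raag_eq_def by (meson rtrancl.rtrancl_into_rtrancl)
qed simp

definition adj_or_eq :: "'v \<Rightarrow> 'v \<Rightarrow> bool" where
  "adj_or_eq a c \<longleftrightarrow> a \<in> V \<and> c \<in> V \<and> (E a c \<or> a = c)"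

definition words_commute :: "'v word \<Rightarrow> 'v word \<Rightarrow> bool" where
  "words_commute x y \<longleftrightarrow> x @ y \<approx> y @ x"

lemma commute_letters_adj_or_eq: "adj_or_eq a c \<Longrightarrow> [(a, b), (c, d)] \<approx> [(c, d), (a, b)]"
proof -
  assume "adj_or_eq a c"
  then consider "E a c" | "a = c" "a \<in> V" unfolding adj_or_eq_def by blast
  then show ?thesis
  proof cases
    case 2
    show ?thesis
    proof (cases "b = d")
      case False
      then have "[(a, b), (c, d)] \<approx> []" "[(c, d), (a, b)] \<approx> []"
        using cancel_letters[of a b] cancel_letters[of a d] 2 by auto
      then show ?thesis using raag_eq_trans raag_eq_sym by blast
    qed (use 2 in simp)
  qed (rule commute_letters)
qed

lemma commute_letter_word:
  "\<forall>q\<in>set y. adj_or_eq a (fst q) \<Longrightarrow> (a, b) # y \<approx> y @ [(a, b)]"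
proof (induction y)
  case (Cons q y)
  obtain c d where q: "q = (c, d)" by force
  have ac: "[(a, b), (c, d)] \<approx> [(c, d), (a, b)]"
    using Cons.prems q by (intro commute_letters_adj_or_eq) simp
  have "(a, b) # q # y \<approx> q # (a, b) # y"
    using raag_eq_context[OF ac, of "[]" y] q by simp
  moreover have "q # (a, b) # y \<approx> q # y @ [(a, b)]"
    using raag_eq_context[OF Cons.IH, of "[q]" "[]"] Cons.prems by simp
  ultimately show ?case using raag_eq_trans q by simp
qed simp

lemma words_commuteI:
  "\<forall>p\<in>set x. \<forall>q\<in>set y. adj_or_eq (fst p) (fst q) \<Longrightarrow> words_commute x y"
  unfolding words_commute_def
proof (induction x)
  case (Cons p x)
  have "p # x @ y \<approx> p # y @ x"
    using raag_eq_context[OF Cons.IH, of "[p]" "[]"] Cons.prems by simp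
  also have "p # y @ x \<approx> y @ p # x"
    using raag_eq_context[OF commute_letter_word[where y = y and a = "fst p" and b = "snd p"], of "[]" x] Cons.prems by simp
  finally show ?case by simp
qed simp

lemma words_commute_sym: "words_commute x y \<Longrightarrow> words_commute y x"
  unfolding words_commute_def using raag_eq_sym by blast

lemma words_commute_inv_word: "word_over V x \<Longrightarrow> words_commute x y \<Longrightarrow> words_commute (inv_word x) y"
proof -
  assume x: "word_over V x" and xy: "words_commute x y"
  let ?i = "inv_word x"
  have "?i @ y \<approx> ?i @ y @ x @ ?i"
    using raag_eq_context[OF raag_eq_sym[OF append_inv_word[OF x]], of "?i @ y" "[]"] by simp
  also have "?i @ y @ x @ ?i \<approx> ?i @ x @ y @ ?i"
    using raag_eq_context[OF raag_eq_sym[OF xy[unfolded words_commute_def]], of ?i ?i] by simp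
  also have "?i @ x @ y @ ?i \<approx> y @ ?i"
    using raag_eq_context[OF inv_word_append[OF x], of "[]" "y @ ?i"] by simp
  finally show ?thesis unfolding words_commute_def .
qed

lemma words_commute_conj:
  assumes "words_commute x y" "word_over V z"
  shows "words_commute (z @ x @ inv_word z) (z @ y @ inv_word z)"
proof -
  let ?i = "inv_word z"
  have "z @ x @ ?i @ z @ y @ ?i \<approx> z @ x @ y @ ?i"
    using raag_eq_context[OF inv_word_append[OF assms(2)], of "z @ x" "y @ ?i"] by simp
  also have "z @ x @ y @ ?i \<approx> z @ y @ x @ ?i"
    using raag_eq_context[OF assms(1)[unfolded words_commute_def], of z ?i] by simp
  also have "z @ y @ x @ ?i \<approx> z @ y @ ?i @ z @ x @ ?i"
    using raag_eq_context[OF raag_eq_sym[OF inv_word_append[OF assms(2)]], of "z @ y" "x @ ?i"]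
    by simp
  finally show ?thesis unfolding words_commute_def by simp
qed

abbreviation G :: "'v word set monoid" where "G \<equiv> RAAG V E"

abbreviation cls :: "'v word \<Rightarrow> 'v word set" where "cls \<equiv> raag_cls V E"

lemma mem_raag_cls: "y \<in> cls w \<longleftrightarrow> w \<approx> y"
  unfolding raag_cls_def by auto

lemma raag_cls_eq_iff: "cls x = cls y \<longleftrightarrow> x \<approx> y"
proof
  assume "cls x = cls y"
  then have "y \<in> cls x" using mem_raag_cls[of y y] by simp
  then show "x \<approx> y" by (simp add: mem_raag_cls)
next
  assume "x \<approx> y"
  then show "cls x = cls y" unfolding set_eq_iff mem_raag_cls using raag_eq_trans raag_eq_sym by blast
qed

lemma raag_mult_cls: "cls a \<otimes>\<^bsub>G\<^esub> cls b = cls (a @ b)"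
proof -
  have "{w. \<exists>a'\<in>cls a. \<exists>b'\<in>cls b. a' @ b' \<approx> w} = cls (a @ b)"
  proof (intro equalityI subsetI)
    fix w assume "w \<in> {w. \<exists>a'\<in>cls a. \<exists>b'\<in>cls b. a' @ b' \<approx> w}"
    then obtain a' b' where "a \<approx> a'" "b \<approx> b'" "a' @ b' \<approx> w" by (auto simp: mem_raag_cls)
    then show "w \<in> cls (a @ b)" unfolding mem_raag_cls using raag_eq_append raag_eq_trans by blast
  next
    fix w assume "w \<in> cls (a @ b)"
    then have "a @ b \<approx> w" by (simp add: mem_raag_cls)
    moreover have "a \<in> cls a" "b \<in> cls b" by (simp_all add: mem_raag_cls)
    ultimately show "w \<in> {w. \<exists>a'\<in>cls a. \<exists>b'\<in>cls b. a' @ b' \<approx> w}"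
      by blast
  qed
  then show ?thesis by (simp add: RAAG_def)
qed

lemma raag_one: "\<one>\<^bsub>G\<^esub> = cls []"
  by (simp add: RAAG_def)

lemma raag_carrier: "carrier G = {cls w | w. word_over V w}"
  by (simp add: RAAG_def word_over_def)

lemma group_RAAG: "group G"
proof (rule groupI)
  fix x assume "x \<in> carrier G"
  then obtain w where w: "word_over V w" "x = cls w" by (auto simp: raag_carrier)
  have "cls (inv_word w) \<in> carrier G"
    using w(1) word_over_inv_word unfolding raag_carrier by blast
  moreover have "cls (inv_word w) \<otimes>\<^bsub>G\<^esub> x = \<one>\<^bsub>G\<^esub>"
    using inv_word_append[OF w(1)] w(2) by (simp add: raag_mult_cls raag_one raag_cls_eq_iff)
  ultimately show "\<exists>y\<in>carrier G. y \<otimes>\<^bsub>G\<^esub> x = \<one>\<^bsub>G\<^esub>" by blast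
next
  show "\<one>\<^bsub>G\<^esub> \<in> carrier G" by (auto simp: raag_carrier raag_one intro!: exI[of _ "[]"])
qed (auto simp: raag_carrier raag_mult_cls raag_one)

lemma raag_inv_cls: "word_over V w \<Longrightarrow> inv\<^bsub>G\<^esub> (cls w) = cls (inv_word w)"
proof (rule group.inv_equality[OF group_RAAG])
  assume w: "word_over V w"
  then show "cls (inv_word w) \<otimes>\<^bsub>G\<^esub> cls w = \<one>\<^bsub>G\<^esub>"
    using inv_word_append by (simp add: raag_mult_cls raag_one raag_cls_eq_iff)
  show "cls w \<in> carrier G" "cls (inv_word w) \<in> carrier G"
    using w word_over_inv_word unfolding raag_carrier by blast+
qed

lemma special_subgroup_eq:
  assumes "U \<subseteq> V"
  shows "special_subgroup V E U = {cls w | w. word_over U w}"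
proof
  show "special_subgroup V E U \<subseteq> {cls w | w. word_over U w}"
    unfolding special_subgroup_def
  proof
    fix h assume "h \<in> generate G (vgen V E ` U)"
    then show "h \<in> {cls w | w. word_over U w}"
    proof (induction rule: generate.induct)
      case (inv h)
      then obtain u where "u \<in> U" "h = cls [(u, True)]" by (auto simp: vgen_def)
      then show ?case using raag_inv_cls[of "[(u, True)]"] assms by (auto intro!: exI[of _ "[(u, False)]"])
    next
      case (eng h1 h2)
      then obtain w1 w2 where "word_over U w1" "h1 = cls w1" "word_over U w2" "h2 = cls w2" by auto
      then show ?case by (auto simp: raag_mult_cls intro!: exI[of _ "w1 @ w2"])
    next
      case one
      show ?case by (auto simp: raag_one intro!: exI[of _ "[]"])
    next
      case (incl h)
      then show ?case by (auto simp: vgen_def)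
    qed
  qed
  have "cls w \<in> special_subgroup V E U" if "word_over U w" for w
    using that
  proof (induction w)
    case Nil then show ?case using generate.one[of G] by (simp add: special_subgroup_def raag_one)
  next
    case (Cons p w)
    obtain a b where p: "p = (a, b)" by force
    have a: "a \<in> U" "word_over U w" using Cons.prems p by auto
    have gen: "vgen V E a \<in> vgen V E ` U" using a by blast
    have "cls [(a, b)] \<in> generate G (vgen V E ` U)"
    proof (cases b)
      case True
      then show ?thesis using generate.incl[OF gen] by (simp add: vgen_def)
    next
      case False
      have "inv\<^bsub>G\<^esub> vgen V E a = cls [(a, False)]"
        using raag_inv_cls[of "[(a, True)]"] a(1) assms by (auto simp: vgen_def)
      then show ?thesis using generate.inv[OF gen, of G] False by simp
    qed
    from generate.eng[OF this Cons.IH[OF a(2), unfolded special_subgroup_def]]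
    show ?case by (simp add: special_subgroup_def raag_mult_cls p)
  qed
  then show "{cls w | w. word_over U w} \<subseteq> special_subgroup V E U" by blast
qed

definition preserves_raag_eq :: "('v word \<Rightarrow> 'v word) \<Rightarrow> bool" where
  "preserves_raag_eq f \<longleftrightarrow> (\<forall>x y. x \<approx> y \<longrightarrow> f x \<approx> f y)"

lemma preserves_raag_eqI:
  assumes "\<And>x y. (x, y) \<in> raag_step V E \<Longrightarrow> f x \<approx> f y"
  shows "preserves_raag_eq f"
  unfolding preserves_raag_eq_def
proof (intro allI impI)
  fix x y assume "x \<approx> y"
  then show "f x \<approx> f y"
  proof (induction rule: raag_eq_induct_step)
    case (step y z)
    then have "f y \<approx> f z" using assms raag_eq_sym by blast
    with step.IH show ?case by (rule raag_eq_trans)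
  qed simp
qed

definition raag_subst :: "('v \<Rightarrow> 'v word) \<Rightarrow> bool" where
  "raag_subst \<sigma> \<longleftrightarrow> (\<forall>a\<in>V. word_over V (\<sigma> a)) \<and> (\<forall>a c. E a c \<longrightarrow> words_commute (\<sigma> a) (\<sigma> c))"

lemma raag_subst_preserves_raag_eq:
  assumes \<sigma>: "raag_subst \<sigma>"
  shows "preserves_raag_eq (word_hom \<sigma>)"
proof (rule preserves_raag_eqI)
  have over: "\<And>a. a \<in> V \<Longrightarrow> word_over V (\<sigma> a)" using \<sigma> unfolding raag_subst_def by blast
  fix x y assume "(x, y) \<in> raag_step V E"
  then consider (cancel) xs ys a b where "a \<in> V" "x = xs @ [(a, b), (a, \<not> b)] @ ys" "y = xs @ ys"
    | (commute) xs ys a b c d where "E a c"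
        "x = xs @ [(a, b), (c, d)] @ ys" "y = xs @ [(c, d), (a, b)] @ ys"
    unfolding raag_step_def by blast
  then show "word_hom \<sigma> x \<approx> word_hom \<sigma> y"
  proof cases
    case cancel
    have "word_hom \<sigma> [(a, b), (a, \<not> b)] \<approx> []"
      using append_inv_word[OF over] inv_word_append[OF over] cancel(1) by (cases b) auto
    from raag_eq_context[OF this, of "word_hom \<sigma> xs" "word_hom \<sigma> ys"] show ?thesis
      using cancel by simp
  next
    case commute
    have "words_commute (\<sigma> a) (\<sigma> c)" "word_over V (\<sigma> a)" "word_over V (\<sigma> c)"
      using \<sigma> commute(1) adj_in_V unfolding raag_subst_def by blast+
    then have "words_commute (if b then \<sigma> a else inv_word (\<sigma> a)) (if d then \<sigma> c else inv_word (\<sigma> c))"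
      using words_commute_inv_word words_commute_sym by (cases b; cases d) auto
    then have "word_hom \<sigma> [(a, b), (c, d)] \<approx> word_hom \<sigma> [(c, d), (a, b)]"
      by (simp add: words_commute_def)
    from raag_eq_context[OF this, of "word_hom \<sigma> xs" "word_hom \<sigma> ys"] show ?thesis
      using commute by (simp only: word_hom_simps(3))
  qed
qed

lemma hom_of_raag_cls: "preserves_raag_eq (word_hom \<sigma>) \<Longrightarrow> hom_of V E \<sigma> (cls w) = cls (word_hom \<sigma> w)"
proof (intro equalityI subsetI)
  assume f: "preserves_raag_eq (word_hom \<sigma>)"
  fix y assume "y \<in> hom_of V E \<sigma> (cls w)"
  then obtain x where "w \<approx> x" "word_hom \<sigma> x \<approx> y" by (auto simp: hom_of_def mem_raag_cls)
  then show "y \<in> cls (word_hom \<sigma> w)"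
    using f raag_eq_trans unfolding preserves_raag_eq_def mem_raag_cls by blast
next
  fix y assume "y \<in> cls (word_hom \<sigma> w)"
  then show "y \<in> hom_of V E \<sigma> (cls w)" using raag_eq_refl by (auto simp: hom_of_def mem_raag_cls)
qed

lemma raag_subst_comp:
  assumes \<sigma>: "raag_subst \<sigma>" and \<tau>: "raag_subst \<tau>"
  shows "raag_subst (\<lambda>u. word_hom \<sigma> (\<tau> u))"
  unfolding raag_subst_def
proof (intro conjI ballI allI impI)
  fix a assume "a \<in> V"
  then show "word_over V (word_hom \<sigma> (\<tau> a))"
    using \<sigma> \<tau> word_over_word_hom[of V V \<sigma>] unfolding raag_subst_def by blast
next
  fix a c assume "E a c"
  then have "\<tau> a @ \<tau> c \<approx> \<tau> c @ \<tau> a" using \<tau> unfolding raag_subst_def words_commute_def by blast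
  then have "word_hom \<sigma> (\<tau> a @ \<tau> c) \<approx> word_hom \<sigma> (\<tau> c @ \<tau> a)"
    using raag_subst_preserves_raag_eq[OF \<sigma>] unfolding preserves_raag_eq_def by blast
  then show "words_commute (word_hom \<sigma> (\<tau> a)) (word_hom \<sigma> (\<tau> c))"
    unfolding words_commute_def by simp
qed

lemma word_hom_raag_eq_letterwise:
  assumes "\<And>a. a \<in> U \<Longrightarrow> \<sigma> a \<approx> \<tau> a" "word_over U x"
  shows "word_hom \<sigma> x \<approx> word_hom \<tau> x"
  using assms(2)
proof (induction x)
  case (Cons p x)
  obtain a b where p: "p = (a, b)" by force
  have "\<sigma> a \<approx> \<tau> a" using assms(1) Cons.prems p by auto
  then have "(if b then \<sigma> a else inv_word (\<sigma> a)) \<approx> (if b then \<tau> a else inv_word (\<tau> a))"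
    using raag_eq_inv_word by auto
  then show ?case using raag_eq_append Cons p by auto
qed simp

lemma word_hom_conj:
  assumes c: "word_over V c" and w: "word_over V w"
  shows "word_hom (\<lambda>u. c @ [(u, True)] @ inv_word c) w \<approx> c @ w @ inv_word c"
  using w
proof (induction w)
  case Nil then show ?case using raag_eq_sym[OF append_inv_word[OF c]] by simp
next
  case (Cons p w)
  have "word_hom (\<lambda>u. c @ [(u, True)] @ inv_word c) (p # w)
        = c @ [p] @ inv_word c @ word_hom (\<lambda>u. c @ [(u, True)] @ inv_word c) w"
    by (cases p) auto
  also have "c @ [p] @ inv_word c @ word_hom (\<lambda>u. c @ [(u, True)] @ inv_word c) w
             \<approx> c @ [p] @ inv_word c @ c @ w @ inv_word c"
    using raag_eq_context[OF Cons.IH, of "c @ [p] @ inv_word c" "[]"] Cons.prems by (cases p) simp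
  also have "c @ [p] @ inv_word c @ c @ w @ inv_word c \<approx> c @ (p # w) @ inv_word c"
    using raag_eq_context[OF inv_word_append[OF c], of "c @ [p]" "w @ inv_word c"] by simp
  finally show ?case .
qed

section \<open>Domination and connectivity\<close>

lemma mem_lk: "w \<in> lk V E u \<longleftrightarrow> w \<in> V \<and> E u w"
  unfolding lk_def by auto

lemma mem_st: "w \<in> st V E u \<longleftrightarrow> w = u \<or> (w \<in> V \<and> E u w)"
  unfolding st_def lk_def by auto

lemma vle_refl: "u \<in> V \<Longrightarrow> vle V E u u"
  unfolding vle_def st_def by auto

lemma vle_adj: "vle V E u v \<Longrightarrow> E u a \<Longrightarrow> a = v \<or> E v a"
  unfolding vle_def using adj_in_V mem_lk mem_st by blast

lemma vle_trans:
  assumes uv: "vle V E u v" and vw: "vle V E v w"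
  shows "vle V E u w"
proof -
  have V: "u \<in> V" "v \<in> V" "w \<in> V" using uv vw unfolding vle_def by auto
  have "a \<in> st V E w" if "E u a" for a
    using vle_adj[OF uv that]
  proof
    assume "E v a"
    then show ?thesis using vle_adj[OF vw] adj_in_V by (auto simp: mem_st)
  next
    assume "a = v"
    then have "u = w \<or> E w u" using vle_adj[OF vw] adj_sym that by blast
    then show ?thesis
    proof
      assume "E w u"
      then have "w = v \<or> E v w" using vle_adj[OF uv] adj_sym by blast
      then show ?thesis using \<open>a = v\<close> V by (auto simp: mem_st adj_commute)
    qed (use that adj_in_V in \<open>auto simp: mem_st\<close>)
  qed
  then show ?thesis using V unfolding vle_def by (auto simp: mem_lk)
qed

lemma mem_vclass_self: "x \<in> V \<Longrightarrow> x \<in> vclass V E x"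
  unfolding vclass_def vequiv_def using vle_refl by auto

lemma vclassD: "u \<in> vclass V E x \<Longrightarrow> vle V E u x \<and> vle V E x u \<and> u \<in> V \<and> x \<in> V"
  unfolding vclass_def vequiv_def vle_def by auto

lemma abelian_class_adj:
  assumes "\<forall>u\<in>V. abelian_set E (vclass V E u)" and "u \<in> vclass V E x" and "u \<noteq> x"
  shows "E x u"
  using assms mem_vclass_self vclassD unfolding abelian_set_def by metis

lemma vle_not_adj: "vle V E v x \<Longrightarrow> y \<noteq> x \<Longrightarrow> \<not> E x y \<Longrightarrow> \<not> E v y"
  using vle_adj by blast

abbreviation conn :: "'v set \<Rightarrow> 'v \<Rightarrow> 'v \<Rightarrow> bool" where "conn \<equiv> conn_in E"

lemma conn_inD: "conn W a b \<Longrightarrow> a \<in> W \<and> b \<in> W"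
  unfolding conn_in_def by auto

lemma conn_in_refl: "a \<in> W \<Longrightarrow> conn W a a"
  unfolding conn_in_def by auto

lemma conn_in_edge: "a \<in> W \<Longrightarrow> b \<in> W \<Longrightarrow> E a b \<Longrightarrow> conn W a b"
  unfolding conn_in_def by auto

lemma conn_in_trans: "conn W a b \<Longrightarrow> conn W b c \<Longrightarrow> conn W a c"
  unfolding conn_in_def by auto

lemma conn_in_sym: "conn W a b \<Longrightarrow> conn W b a"
proof -
  have "sym {(p, q). p \<in> W \<and> q \<in> W \<and> E p q}" unfolding sym_def using adj_sym by auto
  then show "conn W a b \<Longrightarrow> conn W b a"
    using sym_rtrancl unfolding conn_in_def sym_def by blast
qed

lemma conn_in_closed:
  assumes "conn W a b" and "a \<in> D"
    and "\<And>y z. y \<in> D \<Longrightarrow> y \<in> W \<Longrightarrow> z \<in> W \<Longrightarrow> E y z \<Longrightarrow> z \<in> D"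
  shows "b \<in> D"
proof -
  have "(a, b) \<in> {(p, q). p \<in> W \<and> q \<in> W \<and> E p q}\<^sup>*" using assms(1) unfolding conn_in_def by auto
  then show ?thesis by (induction rule: rtrancl_induct) (use assms in blast)+
qed

lemma conn_in_first_step:
  assumes "conn W a b" and "a \<noteq> b"
  obtains p where "p \<in> W" "E a p" "conn W p b"
proof -
  have "(a, b) \<in> {(p, q). p \<in> W \<and> q \<in> W \<and> E p q}\<^sup>*" and "b \<in> W"
    using assms(1) unfolding conn_in_def by auto
  then show ?thesis
    by (cases rule: converse_rtranclE) (use assms(2) that in \<open>auto simp: conn_in_def\<close>)
qed

lemma dominated_isolated:
  assumes "vle V E a w" "a \<notin> st V E w" "conn (V - st V E w) a b"
  shows "a = b"
proof (rule ccontr)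
  assume "a \<noteq> b"
  then obtain p where "p \<in> V - st V E w" "E a p" using conn_in_first_step[OF assms(3)] by blast
  then show False using vle_adj[OF assms(1)] by (auto simp: mem_st)
qed

section \<open>Transvections and partial conjugations\<close>

lemma transvectionE:
  assumes "transvection V E \<sigma>"
  obtains v w e where "vle V E v w" "v \<noteq> w"
    "\<sigma> = left_transvection v w e \<or> \<sigma> = right_transvection v w e"
  using assms unfolding transvection_def left_transvection_def right_transvection_def by blast

lemma partial_conjugationE:
  assumes "partial_conjugation V E \<sigma>"
  obtains v C e where "v \<in> V" "C \<subseteq> V - st V E v" "\<forall>p\<in>C. \<forall>q\<in>V - st V E v. E p q \<longrightarrow> q \<in> C"
    "\<sigma> = conj_subst v C e"
  using assms unfolding partial_conjugation_def conj_subst_def[abs_def] by blast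

lemma words_commute_letters: "E a c \<Longrightarrow> words_commute [(a, b)] [(c, d)]"
  using commute_letters unfolding words_commute_def by simp

text \<open>A transvection only moves v, and its image commutes with every neighbour of v,
  since these neighbours are adjacent or equal to w.\<close>

lemma transvection_raag_subst:
  assumes "transvection V E \<sigma>"
  shows "raag_subst \<sigma>"
proof -
  obtain v w e where vw: "vle V E v w" "v \<noteq> w"
    and "\<sigma> = left_transvection v w e \<or> \<sigma> = right_transvection v w e"
    using assms by (rule transvectionE)
  then have \<sigma>: "\<sigma> = id_subst(v := [(w, e), (v, True)]) \<or> \<sigma> = id_subst(v := [(v, True), (w, e)])"
    by (simp only: left_transvection_def right_transvection_def)
  have V: "v \<in> V" "w \<in> V" using vw unfolding vle_def by auto
  have fixed: "\<sigma> a = [(a, True)]" if "a \<noteq> v" for a using \<sigma> that by (auto simp: id_subst_def)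
  have moved: "words_commute (\<sigma> v) [(c, True)]" if "E v c" for c
  proof (rule words_commuteI)
    have "c = w \<or> E w c" using vle_adj[OF vw(1) that] .
    then have "adj_or_eq w c" "adj_or_eq v c" using V adj_in_V[OF that] that unfolding adj_or_eq_def by auto
    then show "\<forall>p\<in>set (\<sigma> v). \<forall>q\<in>set [(c, True)]. adj_or_eq (fst p) (fst q)" using \<sigma> by auto
  qed
  show ?thesis unfolding raag_subst_def
  proof (intro conjI ballI allI impI)
    fix a assume "a \<in> V" then show "word_over V (\<sigma> a)" using \<sigma> V by (auto simp: id_subst_def)
  next
    fix a c assume ac: "E a c"
    then have "a \<noteq> c" using adj_irrefl by blast
    then consider "a = v" | "c = v" | "a \<noteq> v" "c \<noteq> v" by blast
    then show "words_commute (\<sigma> a) (\<sigma> c)"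
    proof cases
      case 1 then show ?thesis using moved ac fixed \<open>a \<noteq> c\<close> by auto
    next
      case 2 then show ?thesis using moved[of a] adj_sym[OF ac] fixed \<open>a \<noteq> c\<close> words_commute_sym by auto
    next
      case 3 then show ?thesis using fixed words_commute_letters[OF ac] by auto
    qed
  qed
qed

text \<open>A partial conjugation by v commutes with adjacent letters on different sides of C,
  because the letter outside C then lies in st(v).\<close>

lemma partial_conjugation_raag_subst:
  assumes "partial_conjugation V E \<sigma>"
  shows "raag_subst \<sigma>"
proof -
  obtain v C e where v: "v \<in> V" and C: "C \<subseteq> V - st V E v"
    and closed: "\<forall>p\<in>C. \<forall>q\<in>V - st V E v. E p q \<longrightarrow> q \<in> C"
    and "\<sigma> = conj_subst v C e"
    using assms by (rule partial_conjugationE)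
  then have \<sigma>: "\<sigma> = (\<lambda>u. if u \<in> C then [(v, e), (u, True), (v, \<not> e)] else [(u, True)])"
    by (simp only: conj_subst_def[abs_def])
  have across: "words_commute (\<sigma> a) [(c, True)]" if ac: "E a c" and "a \<in> C" "c \<notin> C" for a c
  proof (rule words_commuteI)
    have "c \<in> st V E v" using closed that adj_in_V by blast
    then have "adj_or_eq v c" "adj_or_eq a c" using v adj_in_V[OF ac] ac unfolding adj_or_eq_def by (auto simp: mem_st)
    then show "\<forall>p\<in>set (\<sigma> a). \<forall>q\<in>set [(c, True)]. adj_or_eq (fst p) (fst q)" using \<open>a \<in> C\<close> \<sigma> by auto
  qed
  show ?thesis unfolding raag_subst_def
  proof (intro conjI ballI allI impI)
    fix a assume "a \<in> V" then show "word_over V (\<sigma> a)" using \<sigma> v by auto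
  next
    fix a c assume ac: "E a c"
    consider "a \<in> C" "c \<in> C" | "a \<in> C" "c \<notin> C" | "a \<notin> C" "c \<in> C" | "a \<notin> C" "c \<notin> C" by blast
    then show "words_commute (\<sigma> a) (\<sigma> c)"
    proof cases
      case 1
      then show ?thesis using words_commute_conj[OF words_commute_letters[OF ac], of "[(v, e)]"] v \<sigma> by simp
    next
      case 2 then show ?thesis using across[OF ac] \<sigma> by simp
    next
      case 3 then show ?thesis using across[OF adj_sym[OF ac]] words_commute_sym \<sigma> by simp
    next
      case 4 then show ?thesis using words_commute_letters[OF ac] \<sigma> by simp
    qed
  qed
qed

lemma generator_raag_subst:
  "transvection V E \<sigma> \<or> partial_conjugation V E \<sigma> \<Longrightarrow> raag_subst \<sigma>"
  using transvection_raag_subst partial_conjugation_raag_subst by blast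

lemma transvection_inverse:
  assumes "w \<in> V" "v \<noteq> w"
    and "\<sigma> = left_transvection v w e \<and> \<sigma>' = left_transvection v w (\<not> e) \<or>
         \<sigma> = right_transvection v w e \<and> \<sigma>' = right_transvection v w (\<not> e)"
  shows "word_hom \<sigma> (\<sigma>' u) \<approx> [(u, True)]"
proof (cases "u = v")
  case True
  have "[] @ [(w, \<not> e), (w, \<not> \<not> e)] @ [(v, True)] \<approx> [] @ [] @ [(v, True)]"
    "[(v, True)] @ [(w, e), (w, \<not> e)] @ [] \<approx> [(v, True)] @ [] @ []"
    using raag_eq_context cancel_letters[OF assms(1)] by blast+
  then have "[(w, \<not> e), (w, e), (v, True)] \<approx> [(v, True)]" "[(v, True), (w, e), (w, \<not> e)] \<approx> [(v, True)]"
    by simp_all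
  then show ?thesis
    using assms(2,3) True
    by (cases e) (auto simp: left_transvection_def right_transvection_def id_subst_def)
qed (use assms(3) in \<open>auto simp: left_transvection_def right_transvection_def id_subst_def\<close>)

lemma conj_subst_inverse:
  assumes "v \<in> V" "v \<notin> C"
  shows "word_hom (conj_subst v C e) (conj_subst v C (\<not> e) u) \<approx> [(u, True)]"
proof (cases "u \<in> C")
  case True
  have "[(v, \<not> e), (v, \<not> \<not> e)] @ [(u, True)] @ [(v, \<not> e), (v, \<not> \<not> e)] \<approx> [] @ [(u, True)] @ []"
    using raag_eq_append cancel_letters[OF assms(1)] raag_eq_refl by metis
  then show ?thesis using True assms(2) by (cases e) (auto simp: conj_subst_def)
qed (simp add: conj_subst_def)

lemma conj_adjacent_letter: "E v u \<Longrightarrow> [(v, e), (u, b), (v, \<not> e)] \<approx> [(u, b)]"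
proof -
  assume vu: "E v u"
  have swap: "[(v, e), (u, b)] \<approx> [(u, b), (v, e)]" and cancel: "[(v, e), (v, \<not> e)] \<approx> []"
    using commute_letters[OF vu] cancel_letters adj_in_V[OF vu] by blast+
  have "[(v, e), (u, b), (v, \<not> e)] \<approx> [(u, b), (v, e), (v, \<not> e)]"
    using raag_eq_context[OF swap, of "[]" "[(v, \<not> e)]"] by simp
  also have "[(u, b), (v, e), (v, \<not> e)] \<approx> [(u, b)]"
    using raag_eq_context[OF cancel, of "[(u, b)]" "[]"] by simp
  finally show ?thesis by simp
qed

lemma out0_subst_raag_subst: "\<tau> \<in> out0_subst V E \<Longrightarrow> raag_subst \<tau>"
proof (induction rule: out0_subst.induct)
  case idI
  show ?case unfolding raag_subst_def
    by (auto simp: id_subst_def words_commute_letters)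
next
  case (genI \<tau> \<sigma>)
  then show ?case using raag_subst_comp generator_raag_subst by blast
qed

lemma raag_subst_kill_outside: "raag_subst (kill_outside U)"
  unfolding raag_subst_def kill_outside_def words_commute_def
  using words_commute_letters[unfolded words_commute_def] by auto

section \<open>Replacing vertices of a SIL\<close>

lemma Gamma_S_swap: "Gamma_S V E x2 x1 x3 = Gamma_S V E x1 x2 x3"
  unfolding Gamma_S_def by blast

lemma SIL_swap: "SIL V E x y z \<Longrightarrow> SIL V E y x z"
  unfolding SIL_def Let_def by (auto simp: Int_commute adj_commute)

lemma SIL_D:
  assumes "SIL V E x1 x2 x3"
  shows "x1 \<in> V" "x2 \<in> V" "x3 \<in> V" "x1 \<noteq> x2" "x1 \<noteq> x3" "x2 \<noteq> x3"
    "\<not> E x1 x2" "\<not> E x1 x3" "\<not> E x2 x3" "\<not> E x2 x1" "\<not> E x3 x1" "\<not> E x3 x2"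
    "\<not> conn (V - (lk V E x1 \<inter> lk V E x2)) x3 x1"
    "\<not> conn (V - (lk V E x1 \<inter> lk V E x2)) x3 x2"
  using assms unfolding SIL_def Let_def by (simp_all add: adj_commute)

lemma not_in_Gamma_S:
  assumes "v \<notin> Gamma_S V E x1 x2 x3" "x1 \<in> V" "x2 \<in> V" "x3 \<in> V"
  shows "v \<noteq> x1" "v \<noteq> x2" "v \<noteq> x3"
  using assms mem_vclass_self unfolding Gamma_S_def by auto

lemma SIL_replace_third:
  assumes S: "SIL V E x1 x2 x3" and v: "vle V E v x3" and vS: "v \<notin> Gamma_S V E x1 x2 x3"
  shows "SIL V E x1 x2 v"
proof -
  note S' = SIL_D[OF S]
  let ?W = "V - (lk V E x1 \<inter> lk V E x2)"
  have x3W: "x3 \<in> ?W" using S' by (auto simp: mem_lk)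
  have "\<not> conn ?W v t" if t: "t = x1 \<or> t = x2" for t
  proof
    assume c: "conn ?W v t"
    have "v \<noteq> t" using not_in_Gamma_S[OF vS S'(1-3)] t by auto
    then obtain p where p: "p \<in> ?W" "E v p" "conn ?W p t" using conn_in_first_step[OF c] by blast
    have "p = x3 \<or> E x3 p" using vle_adj[OF v p(2)] .
    then have "conn ?W x3 p" using conn_in_refl[OF x3W] conn_in_edge[OF x3W p(1)] by auto
    then show False using conn_in_trans[OF _ p(3)] S' t by blast
  qed
  moreover have "\<not> E x1 v" "\<not> E x2 v"
    using vle_not_adj[OF v, of x1] vle_not_adj[OF v, of x2] S' adj_commute by auto
  ultimately show ?thesis
    unfolding SIL_def Let_def using S' not_in_Gamma_S[OF vS S'(1-3)] v by (auto simp: vle_def)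
qed

lemma conn_in_avoiding_link:
  assumes S: "SIL V E x1 x2 x3" and "Y \<subseteq> V"
    and avoid: "\<And>y. conn Y x3 y \<Longrightarrow> y \<notin> lk V E x1 \<inter> lk V E x2"
    and "conn Y x3 y"
  shows "conn (V - (lk V E x1 \<inter> lk V E x2)) x3 y"
proof -
  let ?W = "V - (lk V E x1 \<inter> lk V E x2)"
  have "x3 \<in> ?W" using SIL_D[OF S] by (auto simp: mem_lk)
  have "y \<in> {y. conn Y x3 y \<and> conn ?W x3 y}"
  proof (rule conn_in_closed[OF \<open>conn Y x3 y\<close>])
    show "x3 \<in> {y. conn Y x3 y \<and> conn ?W x3 y}"
      using conn_inD[OF \<open>conn Y x3 y\<close>] conn_in_refl \<open>x3 \<in> ?W\<close> by auto
  next
    fix y z assume "y \<in> {y. conn Y x3 y \<and> conn ?W x3 y}" and yz: "y \<in> Y" "z \<in> Y" "E y z"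
    then have cY: "conn Y x3 y" and cW: "conn ?W x3 y" by auto
    have cz: "conn Y x3 z" using conn_in_trans[OF cY conn_in_edge[OF yz]] .
    have "z \<in> ?W" using avoid[OF cz] \<open>Y \<subseteq> V\<close> yz(2) by auto
    moreover have "y \<in> ?W" using conn_inD[OF cW] by blast
    ultimately show "z \<in> {y. conn Y x3 y \<and> conn ?W x3 y}"
      using cz conn_in_trans[OF cW conn_in_edge[OF _ _ yz(3)]] by blast
  qed
  then show ?thesis by simp
qed

text \<open>The component of x3 in the graph minus lk(v) \<inter> lk(x2) stays within its component in the
  graph minus st(v), since leaving through a neighbour of v would lead to x1.\<close>

lemma SIL_replace_first:
  assumes S: "SIL V E x1 x2 x3" and v: "vle V E v x1" and vS: "v \<notin> Gamma_S V E x1 x2 x3"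
    and not_conn: "\<not> conn (V - st V E v) x3 x2"
  shows "SIL V E v x2 x3"
proof -
  note S' = SIL_D[OF S]
  let ?Y = "V - st V E v"
  let ?W = "V - (lk V E x1 \<inter> lk V E x2)"
  let ?W' = "V - (lk V E v \<inter> lk V E x2)"
  have n2: "\<not> E v x2" and n3: "\<not> E v x3"
    using vle_not_adj[OF v, of x2] vle_not_adj[OF v, of x3] S' by auto
  have x3Y: "x3 \<in> ?Y" and x2Y: "x2 \<in> ?Y"
    using S' not_in_Gamma_S[OF vS S'(1-3)] n2 n3 by (auto simp: mem_st)
  have in_W: "conn ?W x3 y" if "conn ?Y x3 y" for y
  proof (rule conn_in_avoiding_link[OF S _ _ that])
    fix y assume y: "conn ?Y x3 y"
    show "y \<notin> lk V E x1 \<inter> lk V E x2"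
    proof
      assume "y \<in> lk V E x1 \<inter> lk V E x2"
      then have "conn ?Y y x2" using x2Y conn_inD[OF y] conn_in_edge adj_sym by (auto simp: mem_lk)
      then show False using not_conn conn_in_trans y by blast
    qed
  qed blast
  have in_Y: "t \<in> {y. conn ?Y x3 y}" if "conn ?W' x3 t" for t
  proof (rule conn_in_closed[OF that])
    show "x3 \<in> {y. conn ?Y x3 y}" using conn_in_refl[OF x3Y] by simp
  next
    fix y z assume yD: "y \<in> {y. conn ?Y x3 y}" and "y \<in> ?W'" "z \<in> ?W'" and e: "E y z"
    then have cy: "conn ?Y x3 y" by blast
    show "z \<in> {y. conn ?Y x3 y}"
    proof (cases "z \<in> ?Y")
      case True
      then show ?thesis using conn_in_trans[OF cy conn_in_edge[OF _ True e]] conn_inD[OF cy] by blast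
    next
      case False
      then have "z = v \<or> E v z" using \<open>z \<in> ?W'\<close> by (auto simp: mem_st)
      moreover have "z \<noteq> v" using e conn_inD[OF cy] adj_in_V by (auto simp: mem_st adj_commute)
      ultimately have vz: "E v z" by blast
      have cW: "conn ?W x3 y" using in_W cy by blast
      have "z \<in> ?W" using \<open>z \<in> ?W'\<close> vz adj_in_V by (auto simp: mem_lk)
      then have "conn ?W x3 z" using conn_in_trans[OF cW conn_in_edge[OF _ _ e]] conn_inD[OF cW] by blast
      moreover have "conn ?W z x1" if "E x1 z"
        using conn_in_edge[OF \<open>z \<in> ?W\<close> _ adj_sym[OF that]] S' by (auto simp: mem_lk)
      ultimately have "conn ?W x3 x1" using vle_adj[OF v vz] conn_in_trans by blast
      then show ?thesis using S' by blast
    qed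
  qed
  have "\<not> conn ?W' x3 v" using in_Y conn_inD[of ?Y x3 v] by (auto simp: mem_st)
  moreover have "\<not> conn ?W' x3 x2" using in_Y not_conn by blast
  ultimately show ?thesis
    unfolding SIL_def Let_def using S' not_in_Gamma_S[OF vS S'(1-3)] v n2 n3 adj_sym
    by (auto simp: vle_def)
qed

text \<open>The path from x3 to x2 meets lk(x1) \<inter> lk(x2), whose vertices are adjacent to the whole
  abelian class of x1.\<close>

lemma Gamma_S_conn_third:
  assumes ab: "\<forall>u\<in>V. abelian_set E (vclass V E u)"
    and S: "SIL V E x1 x2 x3" and v: "vle V E v x1" and vS: "v \<notin> Gamma_S V E x1 x2 x3"
    and c: "conn (V - st V E v) x3 x2"
    and u: "u \<in> Gamma_S V E x1 x2 x3" and us: "u \<notin> st V E v"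
  shows "conn (V - st V E v) x3 u"
proof -
  let ?Y = "V - st V E v"
  have uY: "u \<in> ?Y" using u us unfolding Gamma_S_def vclass_def by auto
  have x3Y: "x3 \<in> ?Y" and x2Y: "x2 \<in> ?Y" using conn_inD[OF c] by auto
  obtain k where k: "conn ?Y x3 k" "k \<in> lk V E x1 \<inter> lk V E x2"
    using conn_in_avoiding_link[OF S _ _ c] SIL_D[OF S] by blast
  have kY: "k \<in> ?Y" using conn_inD[OF k(1)] by auto
  from u consider "u \<in> vclass V E x1" | "u \<in> vclass V E x2" | "u \<in> vclass V E x3"
    unfolding Gamma_S_def by blast
  then show ?thesis
  proof cases
    case 1
    have "k = u \<or> E u k"
    proof (cases "u = x1")
      case False
      then have "vle V E x1 u" using vclassD[OF 1] by auto
      then show ?thesis using vle_adj k(2) by (auto simp: mem_lk)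
    qed (use k(2) adj_sym in \<open>auto simp: mem_lk\<close>)
    then show ?thesis using k(1) conn_in_trans[OF k(1) conn_in_edge[OF kY uY]] adj_sym by blast
  next
    case 2
    then have "u = x2 \<or> E x2 u" using abelian_class_adj[OF ab] by blast
    then show ?thesis using c conn_in_trans[OF c conn_in_edge[OF x2Y uY]] by blast
  next
    case 3
    then have "u = x3 \<or> E x3 u" using abelian_class_adj[OF ab] by blast
    then show ?thesis using conn_in_refl[OF x3Y] conn_in_edge[OF x3Y uY] by blast
  qed
qed

definition SIL_weight :: "'v \<Rightarrow> 'v \<Rightarrow> 'v \<Rightarrow> nat" where
  "SIL_weight x1 x2 x3 =
     card {u\<in>V. vle V E u x1} + card {u\<in>V. vle V E u x2} + card {u\<in>V. vle V E u x3}"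

lemma card_below_less:
  assumes "finite V" and "vle V E v x" and "\<not> vle V E x v"
  shows "card {u\<in>V. vle V E u v} < card {u\<in>V. vle V E u x}"
proof (rule psubset_card_mono)
  have "x \<in> V" using assms(2) unfolding vle_def by auto
  then show "{u\<in>V. vle V E u v} \<subset> {u\<in>V. vle V E u x}"
    using vle_trans[OF _ assms(2)] assms(3) vle_refl by blast
qed (use assms(1) in simp)

lemma not_vle_back:
  assumes "v \<notin> Gamma_S V E x1 x2 x3" "vle V E v x" "x = x1 \<or> x = x2 \<or> x = x3"
  shows "\<not> vle V E x v"
proof
  assume "vle V E x v"
  then have "v \<in> vclass V E x" using assms(2) unfolding vclass_def vequiv_def vle_def by auto
  then show False using assms(1,3) unfolding Gamma_S_def by auto
qed

lemma ex_minimal_SIL: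
  assumes "\<exists>x y z. SIL V E x y z"
  shows "\<exists>x1 x2 x3. SIL V E x1 x2 x3 \<and>
           (\<forall>a b c. SIL V E a b c \<longrightarrow> SIL_weight x1 x2 x3 \<le> SIL_weight a b c)"
  using ex_has_least_nat[of "\<lambda>(x, y, z). SIL V E x y z" _ "\<lambda>(x, y, z). SIL_weight x y z"] assms
  by force

end

section \<open>The image of Fact\<close>

locale reduced_SIL = simplicial V E for V :: "'v set" and E +
  fixes x1 x2 x3 :: 'v
  assumes SIL: "SIL V E x1 x2 x3"
    and upward_closed: "\<And>v w. v \<in> Gamma_S V E x1 x2 x3 \<Longrightarrow> w \<in> Gamma_le_S V E x1 x2 x3 \<Longrightarrow>
                          vle V E v w \<Longrightarrow> w \<in> Gamma_S V E x1 x2 x3"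
    and conn_third: "\<And>v u. v \<in> Gamma_le_S V E x1 x2 x3 - Gamma_S V E x1 x2 x3 \<Longrightarrow>
                       u \<in> Gamma_S V E x1 x2 x3 - st V E v \<Longrightarrow> conn (V - st V E v) x3 u"
begin

abbreviation SS :: "'v set" where "SS \<equiv> Gamma_S V E x1 x2 x3"
abbreviation LL :: "'v set" where "LL \<equiv> Gamma_le_S V E x1 x2 x3"
abbreviation kill :: "'v word \<Rightarrow> 'v word" where "kill \<equiv> word_hom (kill_outside LL)"

lemma SS_subset_LL: "SS \<subseteq> LL"
  unfolding Gamma_S_def Gamma_le_S_def using vclassD by blast

lemma LL_subset_V: "LL \<subseteq> V"
  unfolding Gamma_le_S_def by auto

lemma LL_downward_closed: "vle V E v w \<Longrightarrow> w \<in> LL \<Longrightarrow> v \<in> LL"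
  unfolding Gamma_le_S_def using vle_trans unfolding vle_def by blast

text \<open>For f = kill \<circ> word_hom \<tau> this says, on the level of words, that Fact(\<tau>) maps
  A_{Gamma_S} onto its conjugate by c.\<close>

definition onto_conjugate :: "('v word \<Rightarrow> 'v word) \<Rightarrow> 'v word \<Rightarrow> bool" where
  "onto_conjugate f c \<longleftrightarrow>
     (\<forall>w. word_over SS w \<longrightarrow> (\<exists>w'. word_over SS w' \<and> f w \<approx> c @ w' @ inv_word c)) \<and>
     (\<forall>w'. word_over SS w' \<longrightarrow> (\<exists>w. word_over SS w \<and> f w \<approx> c @ w' @ inv_word c))"

lemma onto_conjugate_conj_letters:
  assumes c: "word_over V c" and \<rho>: "\<And>u. u \<in> SS \<Longrightarrow> \<rho> u \<approx> c @ [(u, True)] @ inv_word c"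
  shows "onto_conjugate (word_hom \<rho>) c"
proof -
  have "word_hom \<rho> w \<approx> c @ w @ inv_word c" if w: "word_over SS w" for w
  proof -
    have "word_hom \<rho> w \<approx> word_hom (\<lambda>u. c @ [(u, True)] @ inv_word c) w"
      using word_hom_raag_eq_letterwise[OF \<rho> w] .
    moreover have "word_over V w" using word_over_mono[OF w] SS_subset_LL LL_subset_V by blast
    ultimately show ?thesis using word_hom_conj[OF c] raag_eq_trans by blast
  qed
  then show ?thesis unfolding onto_conjugate_def by blast
qed

lemma onto_conjugate_fixing:
  "(\<And>u. u \<in> SS \<Longrightarrow> \<rho> u \<approx> [(u, True)]) \<Longrightarrow> onto_conjugate (word_hom \<rho>) []"
  using onto_conjugate_conj_letters[of "[]" \<rho>] by simp

lemma onto_conjugate_invertible: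
  assumes agree: "\<And>u. u \<in> SS \<Longrightarrow> \<rho> u = \<sigma> u"
    and \<sigma>: "\<And>u. u \<in> SS \<Longrightarrow> word_over SS (\<sigma> u)" and \<sigma>': "\<And>u. u \<in> SS \<Longrightarrow> word_over SS (\<sigma>' u)"
    and inverse: "\<And>u. u \<in> SS \<Longrightarrow> word_hom \<sigma> (\<sigma>' u) \<approx> [(u, True)]"
  shows "onto_conjugate (word_hom \<rho>) []"
  unfolding onto_conjugate_def
proof (intro conjI allI impI)
  fix w assume w: "word_over SS w"
  have "word_hom \<rho> w = word_hom \<sigma> w" using word_hom_cong[OF agree w] .
  then show "\<exists>w'. word_over SS w' \<and> word_hom \<rho> w \<approx> [] @ w' @ inv_word []"
    using word_over_word_hom[of SS SS \<sigma>, OF \<sigma> w] by auto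
next
  fix w' assume w': "word_over SS w'"
  have "word_hom (\<lambda>u. word_hom \<sigma> (\<sigma>' u)) w' \<approx> word_hom id_subst w'"
    using word_hom_raag_eq_letterwise[OF _ w', of "\<lambda>u. word_hom \<sigma> (\<sigma>' u)" id_subst] inverse
    by (simp add: id_subst_def)
  moreover have "word_hom \<rho> (word_hom \<sigma>' w') = word_hom \<sigma> (word_hom \<sigma>' w')"
    using word_hom_cong[OF agree word_over_word_hom[of SS SS \<sigma>', OF \<sigma>' w']] .
  ultimately show "\<exists>w. word_over SS w \<and> word_hom \<rho> w \<approx> [] @ w' @ inv_word []"
    using word_over_word_hom[of SS SS \<sigma>', OF \<sigma>' w'] by (auto simp: word_hom_comp)
qed

lemma onto_conjugate_raag_eq:
  assumes "onto_conjugate f c" and "\<And>w. word_over SS w \<Longrightarrow> h w \<approx> f w"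
  shows "onto_conjugate h c"
  using assms raag_eq_trans unfolding onto_conjugate_def by meson

lemma onto_conjugate_comp:
  assumes f: "onto_conjugate f c" and g: "onto_conjugate (word_hom \<rho>) c'"
    and \<rho>: "preserves_raag_eq (word_hom \<rho>)"
  shows "onto_conjugate (\<lambda>w. word_hom \<rho> (f w)) (word_hom \<rho> c @ c')"
proof -
  let ?g = "word_hom \<rho>" and ?c = "word_hom \<rho> c @ c'"
  have comp: "?g (f w) \<approx> ?c @ w'' @ inv_word ?c"
    if "f w \<approx> c @ w' @ inv_word c" and "?g w' \<approx> c' @ w'' @ inv_word c'" for w w' w''
  proof -
    have "?g (f w) \<approx> ?g c @ ?g w' @ inv_word (?g c)"
      using \<rho> that(1) unfolding preserves_raag_eq_def by fastforce
    also have "?g c @ ?g w' @ inv_word (?g c) \<approx> ?g c @ (c' @ w'' @ inv_word c') @ inv_word (?g c)"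
      using raag_eq_context[OF that(2)] .
    finally show ?thesis by simp
  qed
  show ?thesis
    unfolding onto_conjugate_def
  proof (intro conjI allI impI)
    fix w assume "word_over SS w"
    then obtain w' w'' where "word_over SS w''" "f w \<approx> c @ w' @ inv_word c" "?g w' \<approx> c' @ w'' @ inv_word c'"
      using f g unfolding onto_conjugate_def by meson
    then show "\<exists>w''. word_over SS w'' \<and> ?g (f w) \<approx> ?c @ w'' @ inv_word ?c" using comp by blast
  next
    fix w'' assume "word_over SS w''"
    then obtain w w' where "word_over SS w" "f w \<approx> c @ w' @ inv_word c" "?g w' \<approx> c' @ w'' @ inv_word c'"
      using f g unfolding onto_conjugate_def by meson
    then show "\<exists>w. word_over SS w \<and> ?g (f w) \<approx> ?c @ w'' @ inv_word ?c" using comp by blast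
  qed
qed

lemma kill_generator_outside:
  assumes gen: "transvection V E \<sigma> \<or> partial_conjugation V E \<sigma>" and a: "a \<notin> LL"
  shows "kill (\<sigma> a) \<approx> []"
  using gen
proof
  assume "transvection V E \<sigma>"
  then obtain v w e where "vle V E v w" "\<sigma> = left_transvection v w e \<or> \<sigma> = right_transvection v w e"
    by (rule transvectionE)
  moreover have "w \<notin> LL" if "a = v" "vle V E v w" using LL_downward_closed a that by blast
  ultimately show ?thesis using a
    by (cases e) (auto simp: left_transvection_def right_transvection_def id_subst_def kill_outside_def)
next
  assume "partial_conjugation V E \<sigma>"
  then obtain v C e where "v \<in> V" "\<sigma> = conj_subst v C e"
    by (rule partial_conjugationE)
  moreover have "[(v, e), (v, \<not> e)] \<approx> []" using cancel_letters \<open>v \<in> V\<close> by blast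
  ultimately show ?thesis using a by (cases e) (auto simp: conj_subst_def kill_outside_def)
qed

text \<open>This is what makes Fact a homomorphism.\<close>

lemma kill_word_hom_generator:
  assumes gen: "transvection V E \<sigma> \<or> partial_conjugation V E \<sigma>" and x: "word_over V x"
  shows "kill (word_hom \<sigma> x) \<approx> kill (word_hom \<sigma> (kill x))"
proof -
  have "kill (\<sigma> a) \<approx> kill (word_hom \<sigma> (kill_outside LL a))" if "a \<in> V" for a
    using kill_generator_outside[OF gen] by (cases "a \<in> LL") (simp_all add: kill_outside_def)
  from word_hom_raag_eq_letterwise[OF this x] show ?thesis by (simp add: word_hom_comp)
qed

lemma transvection_onto_conjugate:
  assumes "transvection V E \<sigma>"
  shows "onto_conjugate (word_hom (\<lambda>u. kill (\<sigma> u))) []"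
proof -
  obtain v w e where vw: "vle V E v w" "v \<noteq> w"
    and \<sigma>: "\<sigma> = left_transvection v w e \<or> \<sigma> = right_transvection v w e"
    using assms by (rule transvectionE)
  have fixed: "kill (\<sigma> u) = [(u, True)]" if "u \<in> SS" "u \<noteq> v" for u
    using \<sigma> that SS_subset_LL
    by (auto simp: left_transvection_def right_transvection_def id_subst_def kill_outside_def)
  consider "v \<notin> SS" | "v \<in> SS" "w \<notin> LL" | "v \<in> SS" "w \<in> SS"
    using upward_closed vw(1) by blast
  then show ?thesis
  proof cases
    case 1
    then show ?thesis using fixed by (intro onto_conjugate_fixing) (metis raag_eq_refl)
  next
    case 2
    then have "kill (\<sigma> v) = [(v, True)]" using \<sigma> SS_subset_LL
      by (cases e) (auto simp: left_transvection_def right_transvection_def kill_outside_def)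
    then show ?thesis using fixed by (intro onto_conjugate_fixing) (metis raag_eq_refl)
  next
    case 3
    obtain \<sigma>' where \<sigma>\<sigma>': "\<sigma> = left_transvection v w e \<and> \<sigma>' = left_transvection v w (\<not> e) \<or>
        \<sigma> = right_transvection v w e \<and> \<sigma>' = right_transvection v w (\<not> e)"
      using \<sigma> by blast
    have over: "word_over SS (\<tau> u)"
      if "\<tau> = left_transvection v w b \<or> \<tau> = right_transvection v w b" "u \<in> SS" for \<tau> b u
      using that 3 by (auto simp: left_transvection_def right_transvection_def id_subst_def)
    show ?thesis
    proof (rule onto_conjugate_invertible)
      fix u assume u: "u \<in> SS"
      show "word_over SS (\<sigma> u)" "word_over SS (\<sigma>' u)" using over[OF _ u] \<sigma>\<sigma>' by blast+
      show "kill (\<sigma> u) = \<sigma> u"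
        using word_hom_kill_outside_id word_over_mono[OF \<open>word_over SS (\<sigma> u)\<close> SS_subset_LL] .
      show "word_hom \<sigma> (\<sigma>' u) \<approx> [(u, True)]"
        using transvection_inverse[OF _ vw(2) \<sigma>\<sigma>'] 3 SS_subset_LL LL_subset_V by blast
    qed
  qed
qed

lemma conj_subst_onto_conjugate:
  assumes v: "v \<in> V" and C: "C \<subseteq> V - st V E v"
    and closed: "\<forall>p\<in>C. \<forall>q\<in>V - st V E v. E p q \<longrightarrow> q \<in> C"
  shows "\<exists>c. word_over LL c \<and> onto_conjugate (word_hom (\<lambda>u. kill (conj_subst v C e u))) c"
proof -
  let ?\<rho> = "\<lambda>u. kill (conj_subst v C e u)"
  have vC: "v \<notin> C" using C by (auto simp: mem_st)
  have C_conn: "b \<in> C" if "conn (V - st V E v) a b" "a \<in> C" for a b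
    using conn_in_closed[OF that] closed by blast
  have outside: "?\<rho> u = [(u, True)]" if "u \<in> SS" "u \<notin> C" for u
    using that SS_subset_LL by (auto simp: conj_subst_def kill_outside_def)
  have inside: "?\<rho> u = [(v, e), (u, True), (v, \<not> e)]" if "u \<in> SS" "u \<in> C" "v \<in> LL" for u
    using that SS_subset_LL by (cases e) (auto simp: conj_subst_def kill_outside_def)
  consider "v \<notin> LL" | "v \<in> SS" | "v \<in> LL - SS" "x3 \<in> C" | "v \<in> LL - SS" "x3 \<notin> C" by blast
  then show ?thesis
  proof cases
    case 1
    then have "?\<rho> u = [(u, True)]" if "u \<in> SS" for u
      using that SS_subset_LL by (cases e) (auto simp: conj_subst_def kill_outside_def)
    then show ?thesis by (intro exI[of _ "[]"]) (simp add: onto_conjugate_fixing)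
  next
    case 2
    have "onto_conjugate (word_hom ?\<rho>) []"
    proof (rule onto_conjugate_invertible)
      fix u assume u: "u \<in> SS"
      show "word_over SS (conj_subst v C e u)" "word_over SS (conj_subst v C (\<not> e) u)"
        using u 2 by (simp_all add: conj_subst_def)
      show "?\<rho> u = conj_subst v C e u"
        using word_hom_kill_outside_id word_over_mono[OF \<open>word_over SS (conj_subst v C e u)\<close> SS_subset_LL] .
      show "word_hom (conj_subst v C e) (conj_subst v C (\<not> e) u) \<approx> [(u, True)]"
        using conj_subst_inverse[OF v vC] .
    qed
    then show ?thesis by (intro exI[of _ "[]"]) simp
  next
    case 3
    txt \<open>Gamma_S outside st(v) lies in the component of x3, hence in C: on Gamma_S the
      partial conjugation is conjugation by v.\<close>
    have "?\<rho> u \<approx> [(v, e)] @ [(u, True)] @ inv_word [(v, e)]" if u: "u \<in> SS" for u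
    proof (cases "u \<in> C")
      case False
      have "u \<in> st V E v" using conn_third 3 u C_conn False by blast
      moreover have "u \<noteq> v" using u 3 by blast
      ultimately have "E v u" by (simp add: mem_st)
      then show ?thesis using outside u False raag_eq_sym[OF conj_adjacent_letter] by simp
    qed (use inside 3 u in simp)
    then have "onto_conjugate (word_hom ?\<rho>) [(v, e)]"
      using v by (intro onto_conjugate_conj_letters) simp_all
    then show ?thesis using 3 by (intro exI[of _ "[(v, e)]"]) simp
  next
    case 4
    have "u \<notin> C" if "u \<in> SS" for u
      using conn_third 4 that C_conn conn_in_sym C by blast
    then show ?thesis using outside by (intro exI[of _ "[]"]) (simp add: onto_conjugate_fixing)
  qed
qed

lemma generator_onto_conjugate:
  assumes "transvection V E \<sigma> \<or> partial_conjugation V E \<sigma>"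
  shows "\<exists>c. word_over LL c \<and> onto_conjugate (word_hom (\<lambda>u. kill (\<sigma> u))) c"
  using assms transvection_onto_conjugate conj_subst_onto_conjugate
  by (metis partial_conjugationE word_over_simps(1))

lemma out0_subst_onto_conjugate:
  assumes "\<tau> \<in> out0_subst V E"
  shows "\<exists>c. word_over LL c \<and> onto_conjugate (\<lambda>w. kill (word_hom \<tau> w)) c"
  using assms
proof (induction rule: out0_subst.induct)
  case idI
  have "kill_outside LL u \<approx> [(u, True)]" if "u \<in> SS" for u
    using that SS_subset_LL by (auto simp: kill_outside_def)
  then have "onto_conjugate kill []" by (rule onto_conjugate_fixing)
  then show ?case by (intro exI[of _ "[]"]) simp
next
  case (genI \<tau> \<sigma>)
  let ?\<rho> = "\<lambda>u. kill (\<sigma> u)"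
  obtain c where c: "word_over LL c" "onto_conjugate (\<lambda>w. kill (word_hom \<tau> w)) c"
    using genI.IH by blast
  obtain c' where c': "word_over LL c'" "onto_conjugate (word_hom ?\<rho>) c'"
    using generator_onto_conjugate[OF genI.hyps(2)] by blast
  have "raag_subst ?\<rho>"
    using raag_subst_comp[OF raag_subst_kill_outside generator_raag_subst[OF genI.hyps(2)]] .
  then have "onto_conjugate (\<lambda>w. word_hom ?\<rho> (kill (word_hom \<tau> w))) (word_hom ?\<rho> c @ c')"
    using onto_conjugate_comp[OF c(2) c'(2)] raag_subst_preserves_raag_eq by blast
  moreover have "kill (word_hom (\<lambda>u. word_hom \<sigma> (\<tau> u)) w) \<approx> word_hom ?\<rho> (kill (word_hom \<tau> w))"
    if "word_over SS w" for w
  proof -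
    have "word_over V (word_hom \<tau> w)"
      using word_over_word_hom out0_subst_raag_subst[OF genI.hyps(1)] word_over_mono[OF that]
        SS_subset_LL LL_subset_V
      unfolding raag_subst_def by (metis order_trans)
    then show ?thesis
      using kill_word_hom_generator[OF genI.hyps(2)] by (simp add: word_hom_comp)
  qed
  moreover have "word_over LL (word_hom ?\<rho> c @ c')"
    using c'(1) word_over_word_hom_kill_outside by (simp add: word_hom_comp)
  ultimately show ?case using onto_conjugate_raag_eq by metis
qed

lemma Fact_conjugates_Gamma_S:
  assumes "\<tau> \<in> out0_subst V E"
  shows "\<exists>g\<in>special_subgroup V E LL.
           (\<lambda>h. hom_of V E (kill_outside LL) (hom_of V E \<tau> h)) ` special_subgroup V E SS =
           {g \<otimes>\<^bsub>G\<^esub> h \<otimes>\<^bsub>G\<^esub> inv\<^bsub>G\<^esub> g | h. h \<in> special_subgroup V E SS}"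
proof -
  obtain c where c: "word_over LL c" "onto_conjugate (\<lambda>w. kill (word_hom \<tau> w)) c"
    using out0_subst_onto_conjugate[OF assms] by blast
  have cV: "word_over V c" using word_over_mono[OF c(1) LL_subset_V] .
  have "preserves_raag_eq kill" "preserves_raag_eq (word_hom \<tau>)"
    using raag_subst_preserves_raag_eq raag_subst_kill_outside out0_subst_raag_subst[OF assms] by blast+
  then have image: "hom_of V E (kill_outside LL) (hom_of V E \<tau> (cls w)) = cls (kill (word_hom \<tau> w))"
    for w by (simp only: hom_of_raag_cls)
  have conj: "cls c \<otimes>\<^bsub>G\<^esub> cls w \<otimes>\<^bsub>G\<^esub> inv\<^bsub>G\<^esub> cls c = cls (c @ w @ inv_word c)" for w
    by (simp only: raag_inv_cls[OF cV] raag_mult_cls append_assoc)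
  have "(\<lambda>w. cls (kill (word_hom \<tau> w))) ` {w. word_over SS w} =
        (\<lambda>w. cls (c @ w @ inv_word c)) ` {w. word_over SS w}"
  proof (intro equalityI subsetI)
    fix x assume "x \<in> (\<lambda>w. cls (kill (word_hom \<tau> w))) ` {w. word_over SS w}"
    then obtain w w' where "x = cls (kill (word_hom \<tau> w))" "word_over SS w'"
      "kill (word_hom \<tau> w) \<approx> c @ w' @ inv_word c"
      using c(2) unfolding onto_conjugate_def by blast
    then show "x \<in> (\<lambda>w. cls (c @ w @ inv_word c)) ` {w. word_over SS w}"
      using raag_cls_eq_iff by blast
  next
    fix x assume "x \<in> (\<lambda>w. cls (c @ w @ inv_word c)) ` {w. word_over SS w}"
    then obtain w w' where "x = cls (c @ w' @ inv_word c)" "word_over SS w"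
      "kill (word_hom \<tau> w) \<approx> c @ w' @ inv_word c"
      using c(2) unfolding onto_conjugate_def by blast
    then show "x \<in> (\<lambda>w. cls (kill (word_hom \<tau> w))) ` {w. word_over SS w}"
      using raag_cls_eq_iff by blast
  qed
  moreover have "{cls w | w. word_over SS w} = cls ` {w. word_over SS w}"
    "{cls c \<otimes>\<^bsub>G\<^esub> h \<otimes>\<^bsub>G\<^esub> inv\<^bsub>G\<^esub> cls c | h. h \<in> cls ` {w. word_over SS w}} =
       (\<lambda>h. cls c \<otimes>\<^bsub>G\<^esub> h \<otimes>\<^bsub>G\<^esub> inv\<^bsub>G\<^esub> cls c) ` cls ` {w. word_over SS w}"
    by blast+
  ultimately have "(\<lambda>h. hom_of V E (kill_outside LL) (hom_of V E \<tau> h)) ` {cls w | w. word_over SS w} =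
        {cls c \<otimes>\<^bsub>G\<^esub> h \<otimes>\<^bsub>G\<^esub> inv\<^bsub>G\<^esub> cls c | h. h \<in> {cls w | w. word_over SS w}}"
    by (simp only: image_image image conj)
  moreover have "cls c \<in> special_subgroup V E LL"
    using c(1) special_subgroup_eq[OF LL_subset_V] by blast
  moreover have "special_subgroup V E SS = {cls w | w. word_over SS w}"
    using SS_subset_LL LL_subset_V by (intro special_subgroup_eq) blast
  ultimately show ?thesis by auto
qed

lemma special_SIL:
  assumes "\<forall>u\<in>V. abelian_set E (vclass V E u)"
  shows "special_SIL V E x1 x2 x3"
  using assms SIL SIL_D[OF SIL] Fact_conjugates_Gamma_S unfolding special_SIL_def Let_def by blast

end

section \<open>Minimal SILs\<close>

locale minimal_SIL = simplicial V E for V :: "'v set" and E +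
  fixes x1 x2 x3 :: 'v
  assumes finite_V: "finite V"
    and abelian: "\<forall>u\<in>V. abelian_set E (vclass V E u)"
    and SIL: "SIL V E x1 x2 x3"
    and minimal: "\<And>a b c. SIL V E a b c \<Longrightarrow> SIL_weight x1 x2 x3 \<le> SIL_weight a b c"
begin

lemma minimal_SIL_swap: "minimal_SIL V E x2 x1 x3"
proof
  show "SIL V E x2 x1 x3" using SIL_swap[OF SIL] .
  show "SIL_weight x2 x1 x3 \<le> SIL_weight a b c" if "SIL V E a b c" for a b c
    using minimal[OF that] unfolding SIL_weight_def by simp
qed (use finite_V abelian in auto)

lemma not_below_third: "v \<notin> Gamma_S V E x1 x2 x3 \<Longrightarrow> \<not> vle V E v x3"
proof
  assume vS: "v \<notin> Gamma_S V E x1 x2 x3" and v: "vle V E v x3"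
  have "SIL_weight x1 x2 v < SIL_weight x1 x2 x3"
    using card_below_less[OF finite_V v not_vle_back[OF vS v]] unfolding SIL_weight_def by simp
  then show False using minimal[OF SIL_replace_third[OF SIL v vS]] by simp
qed

lemma below_first_conn_third_second:
  assumes vS: "v \<notin> Gamma_S V E x1 x2 x3" and v: "vle V E v x1"
  shows "conn (V - st V E v) x3 x2"
proof (rule ccontr)
  assume "\<not> conn (V - st V E v) x3 x2"
  then have "SIL V E v x2 x3" using SIL_replace_first[OF SIL v vS] by blast
  moreover have "SIL_weight v x2 x3 < SIL_weight x1 x2 x3"
    using card_below_less[OF finite_V v not_vle_back[OF vS v]] unfolding SIL_weight_def by simp
  ultimately show False using minimal by fastforce
qed

text \<open>A vertex strictly between a vertex of Gamma_S and x1 would isolate x2 or x3 from the other in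
  the graph minus its star.\<close>

lemma not_between_Gamma_S_and_first:
  assumes u: "u \<in> Gamma_S V E x1 x2 x3" and uw: "vle V E u w" and w: "vle V E w x1"
  shows "w \<in> Gamma_S V E x1 x2 x3"
proof (rule ccontr)
  assume wS: "w \<notin> Gamma_S V E x1 x2 x3"
  note S = SIL_D[OF SIL]
  have c: "conn (V - st V E w) x3 x2" using below_first_conn_third_second[OF wS w] .
  have not_st: "x2 \<notin> st V E w" "x3 \<notin> st V E w"
    using not_in_Gamma_S[OF wS S(1-3)] vle_adj[OF w] S by (auto simp: mem_st)
  obtain i where i: "i = x1 \<or> i = x2 \<or> i = x3" "u \<in> vclass V E i"
    using u unfolding Gamma_S_def by blast
  then have iw: "vle V E i w" using vle_trans[OF _ uw] vclassD by blast
  from i(1) show False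
  proof (elim disjE)
    assume "i = x1"
    then show False using not_vle_back[OF wS w] iw by blast
  next
    assume "i = x2"
    then have "x2 = x3" using dominated_isolated[OF _ not_st(1) conn_in_sym[OF c]] iw by blast
    then show False using S by blast
  next
    assume "i = x3"
    then have "x3 = x2" using dominated_isolated[OF _ not_st(2) c] iw by blast
    then show False using S by blast
  qed
qed

end

sublocale minimal_SIL \<subseteq> reduced_SIL
proof
  interpret swapped: minimal_SIL V E x2 x1 x3 by (rule minimal_SIL_swap)
  show "SIL V E x1 x2 x3" by (rule SIL)
  show "w \<in> Gamma_S V E x1 x2 x3"
    if v: "v \<in> Gamma_S V E x1 x2 x3" and w: "w \<in> Gamma_le_S V E x1 x2 x3" and vw: "vle V E v w" for v w
  proof (rule ccontr)
    assume wS: "w \<notin> Gamma_S V E x1 x2 x3"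
    then have "vle V E w x1 \<or> vle V E w x2"
      using w not_below_third unfolding Gamma_le_S_def by blast
    then show False
      using wS not_between_Gamma_S_and_first[OF v vw] swapped.not_between_Gamma_S_and_first[of v w] v vw
      by (auto simp: Gamma_S_swap)
  qed
  show "conn (V - st V E v) x3 u"
    if v: "v \<in> Gamma_le_S V E x1 x2 x3 - Gamma_S V E x1 x2 x3"
      and u: "u \<in> Gamma_S V E x1 x2 x3 - st V E v" for v u
  proof -
    have vS: "v \<notin> Gamma_S V E x1 x2 x3" and vS': "v \<notin> Gamma_S V E x2 x1 x3"
      using v by (auto simp: Gamma_S_swap)
    have "vle V E v x1 \<or> vle V E v x2"
      using v not_below_third unfolding Gamma_le_S_def by blast
    then show ?thesis
    proof
      assume "vle V E v x1"
      from Gamma_S_conn_third[OF abelian SIL this vS below_first_conn_third_second[OF vS this]]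
      show ?thesis using u by blast
    next
      assume "vle V E v x2"
      from Gamma_S_conn_third[OF abelian SIL_swap[OF SIL] this vS'
          swapped.below_first_conn_third_second[OF vS' this]]
      show ?thesis using u by (simp add: Gamma_S_swap)
    qed
  qed
qed

theorem proposition3p9:
  fixes V :: "'v set" and E :: "'v \<Rightarrow> 'v \<Rightarrow> bool"
  assumes "finite V" and "simplicial_graph V E"
    and "\<forall>u\<in>V. abelian_set E (vclass V E u)"
    and "\<exists>x y z. SIL V E x y z"
  shows "\<exists>x y z. special_SIL V E x y z"
proof -
  interpret simplicial V E by (rule simplicial.intro) fact
  obtain x1 x2 x3 where "SIL V E x1 x2 x3"
    and "\<forall>a b c. SIL V E a b c \<longrightarrow> SIL_weight x1 x2 x3 \<le> SIL_weight a b c"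
    using ex_minimal_SIL[OF assms(4)] by blast
  then interpret minimal_SIL V E x1 x2 x3
    using assms by unfold_locales blast+
  show ?thesis using special_SIL[OF assms(3)] by blast
qed

end
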